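(* Let $S$ be a finite set of endomorphisms of $\mathbb{P}^N$, all of degree at least $2$, let $C_S:=\max\{\sup_{\phi\in S}C(\phi),1\}$, let $K/\mathbb{Q}$ be a finite extension over which every map in $S$ is defined, let $P\in\mathbb{P}^N(K)$, and let $F_{P,S}:=\{Q\in\mathrm{Orb}_S(P):h(Q)\leq 2C_S\}$. Then $\phi(\mathrm{Orb}_S(P)\setminus F_{P,S})\subseteq\mathrm{Orb}_S(P)\setminus F_{P,S}$ for all $\phi\in S$.
   Context: $h$ is the absolute Weil height on $\mathbb{P}^N(\overline{\mathbb{Q}})$. For an endomorphism $\phi$ of degree $d_\phi$, $C(\phi)=\sup_{Q\in\mathbb{P}^N(\overline{\mathbb{Q}})}|h(\phi(Q))-d_\phi h(Q)|$. $\mathrm{Orb}_S(P)=\{\rho(P):\rho\in M_S\}$, where $M_S$ is the monoid of the identity and all finite compositions of elements of $S$. *)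

theory Defs
  imports Complex_Main "HOL-Computational_Algebra.Polynomial" "HOL-Library.Extended_Real"
begin

text \<open>A representative of a point of P^N(Qbar): a nonzero vector (x_0,...,x_N) of
  algebraic numbers, encoded as a function nat => complex vanishing beyond N.\<close>
definition qbar_vec :: "nat \<Rightarrow> (nat \<Rightarrow> complex) \<Rightarrow> bool" where
  "qbar_vec N x \<longleftrightarrow> (\<forall>i\<le>N. algebraic (x i)) \<and> (\<forall>i>N. x i = 0) \<and> (\<exists>i\<le>N. x i \<noteq> 0)"

definition proj_class :: "nat \<Rightarrow> (nat \<Rightarrow> complex) \<Rightarrow> (nat \<Rightarrow> complex) set" where
  "proj_class N x = {y. qbar_vec N y \<and> (\<exists>c. c \<noteq> 0 \<and> (\<forall>i. y i = c * x i))}"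

definition PN :: "nat \<Rightarrow> (nat \<Rightarrow> complex) set set" where
  "PN N = {proj_class N x | x. qbar_vec N x}"

definition rat_span :: "complex set \<Rightarrow> complex set" where
  "rat_span B = {(\<Sum>b\<in>B. of_rat (q b) * b) | q. True}"

definition number_field :: "complex set \<Rightarrow> bool" where
  "number_field K \<longleftrightarrow> 0 \<in> K \<and> 1 \<in> K \<and>
     (\<forall>a\<in>K. \<forall>b\<in>K. a + b \<in> K \<and> a * b \<in> K) \<and>
     (\<forall>a\<in>K. - a \<in> K) \<and> (\<forall>a\<in>K. a \<noteq> 0 \<longrightarrow> inverse a \<in> K) \<and>
     (\<exists>B. finite B \<and> B \<subseteq> K \<and> K = rat_span B)"

definition field_degree :: "complex set \<Rightarrow> nat" where
  "field_degree K = (LEAST n. \<exists>B. finite B \<and> B \<subseteq> K \<and> card B = n \<and> K = rat_span B)"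

text \<open>Field embeddings K -> C (extended by 0 outside K, so that they are unique as functions).\<close>
definition embeddings :: "complex set \<Rightarrow> (complex \<Rightarrow> complex) set" where
  "embeddings K = {\<sigma>. (\<forall>a\<in>K. \<forall>b\<in>K. \<sigma> (a + b) = \<sigma> a + \<sigma> b \<and> \<sigma> (a * b) = \<sigma> a * \<sigma> b)
      \<and> \<sigma> 1 = 1 \<and> (\<forall>z. z \<notin> K \<longrightarrow> \<sigma> z = 0)}"

definition ring_of_integers :: "complex set \<Rightarrow> complex set" where
  "ring_of_integers K = {z \<in> K. algebraic_int z}"

definition coord_ideal :: "complex set \<Rightarrow> nat \<Rightarrow> (nat \<Rightarrow> complex) \<Rightarrow> complex set" where
  "coord_ideal K N x = {(\<Sum>i\<le>N. a i * x i) | a. \<forall>i\<le>N. a i \<in> ring_of_integers K}"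

definition ideal_norm :: "complex set \<Rightarrow> complex set \<Rightarrow> nat" where
  "ideal_norm K I = card ((\<lambda>a. {a + b | b. b \<in> I}) ` ring_of_integers K)"

text \<open>The archimedean places are accounted for by the embeddings (complex places twice, i.e. n_v = 2),
  and the non-archimedean contribution sum_v n_v log max_i |x_i|_v equals - log N(ideal).\<close>
definition weil_height_K :: "complex set \<Rightarrow> nat \<Rightarrow> (nat \<Rightarrow> complex) \<Rightarrow> real" where
  "weil_height_K K N x =
     ((\<Sum>\<sigma>\<in>embeddings K. ln (Max ((\<lambda>i. cmod (\<sigma> (x i))) ` {..N})))
       - ln (real (ideal_norm K (coord_ideal K N x)))) / real (field_degree K)"

text \<open>Absolute Weil height of a point of P^N(Qbar), computed from any integral representative
  and any number field containing its coordinates (the value is independent of these choices).\<close>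
definition weil_height :: "nat \<Rightarrow> (nat \<Rightarrow> complex) set \<Rightarrow> real" where
  "weil_height N Q =
     (let x = (SOME x. x \<in> Q \<and> (\<forall>i\<le>N. algebraic_int (x i)));
          K = (SOME K. number_field K \<and> (\<forall>i\<le>N. x i \<in> K))
      in weil_height_K K N x)"

definition point_over :: "nat \<Rightarrow> complex set \<Rightarrow> (nat \<Rightarrow> complex) set \<Rightarrow> bool" where
  "point_over N K Q \<longleftrightarrow> (\<exists>x\<in>Q. \<forall>i\<le>N. x i \<in> K)"

definition hmonos :: "nat \<Rightarrow> nat \<Rightarrow> (nat \<Rightarrow> nat) set" where
  "hmonos N d = {e. (\<forall>i>N. e i = 0) \<and> (\<Sum>i\<le>N. e i) = d}"

text \<open>A homogeneous polynomial of degree d is a coefficient function on hmonos N d.\<close>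
definition hpoly_eval :: "nat \<Rightarrow> nat \<Rightarrow> ((nat \<Rightarrow> nat) \<Rightarrow> complex) \<Rightarrow> (nat \<Rightarrow> complex) \<Rightarrow> complex" where
  "hpoly_eval N d c x = (\<Sum>e\<in>hmonos N d. c e * (\<Prod>i\<le>N. x i ^ e i))"

text \<open>An endomorphism of degree d: a tuple (F_0,...,F_N) of homogeneous polynomials of degree d
  with algebraic coefficients and no common nontrivial zero in Qbar^(N+1).\<close>
type_synonym endo = "nat \<times> (nat \<Rightarrow> (nat \<Rightarrow> nat) \<Rightarrow> complex)"

definition endo_deg :: "endo \<Rightarrow> nat" where
  "endo_deg \<phi> = fst \<phi>"

definition is_endo :: "nat \<Rightarrow> endo \<Rightarrow> bool" where
  "is_endo N \<phi> \<longleftrightarrow> (let d = fst \<phi>; F = snd \<phi> in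
     (\<forall>i e. algebraic (F i e)) \<and> (\<forall>i e. e \<notin> hmonos N d \<longrightarrow> F i e = 0) \<and>
     (\<forall>i>N. \<forall>e. F i e = 0) \<and>
     (\<forall>x. qbar_vec N x \<longrightarrow> (\<exists>i\<le>N. hpoly_eval N d (F i) x \<noteq> 0)))"

definition endo_over :: "complex set \<Rightarrow> endo \<Rightarrow> bool" where
  "endo_over K \<phi> \<longleftrightarrow> (\<exists>c. c \<noteq> 0 \<and> (\<forall>i e. c * snd \<phi> i e \<in> K))"

definition endo_app :: "nat \<Rightarrow> endo \<Rightarrow> (nat \<Rightarrow> complex) set \<Rightarrow> (nat \<Rightarrow> complex) set" where
  "endo_app N \<phi> Q = proj_class N
     (\<lambda>i. if i \<le> N then hpoly_eval N (fst \<phi>) (snd \<phi> i) (SOME x. x \<in> Q) else 0)"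

definition height_const :: "nat \<Rightarrow> endo \<Rightarrow> ereal" where
  "height_const N \<phi> = (SUP Q\<in>PN N.
      ereal \<bar>weil_height N (endo_app N \<phi> Q) - real (endo_deg \<phi>) * weil_height N Q\<bar>)"

definition height_const_set :: "nat \<Rightarrow> endo set \<Rightarrow> ereal" where
  "height_const_set N S = max (SUP \<phi>\<in>S. height_const N \<phi>) 1"

inductive_set comp_monoid :: "nat \<Rightarrow> endo set \<Rightarrow> ((nat \<Rightarrow> complex) set \<Rightarrow> (nat \<Rightarrow> complex) set) set"
  for N S where
  id_in: "id \<in> comp_monoid N S"
| comp_in: "\<rho> \<in> comp_monoid N S \<Longrightarrow> \<phi> \<in> S \<Longrightarrow> (endo_app N \<phi> \<circ> \<rho>) \<in> comp_monoid N S"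

definition orbit :: "nat \<Rightarrow> endo set \<Rightarrow> (nat \<Rightarrow> complex) set \<Rightarrow> (nat \<Rightarrow> complex) set set" where
  "orbit N S P = {\<rho> P | \<rho>. \<rho> \<in> comp_monoid N S}"

definition small_orbit :: "nat \<Rightarrow> endo set \<Rightarrow> (nat \<Rightarrow> complex) set \<Rightarrow> (nat \<Rightarrow> complex) set set" where
  "small_orbit N S P = {Q \<in> orbit N S P. ereal (weil_height N Q) \<le> 2 * height_const_set N S}"

end

theory Submission
  imports Defs "HOL-Algebra.Algebraic_Closure_Type"
begin

text \<open>If \<open>h(Q) > 2 C\<^sub>S\<close> and \<open>\<phi> \<in> S\<close>, then
  \<open>h(\<phi>(Q)) \<ge> d\<^sub>\<phi> h(Q) - C\<^sub>S \<ge> 2 h(Q) - C\<^sub>S > h(Q) + C\<^sub>S > 2 C\<^sub>S\<close>;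
  if \<open>C\<^sub>S = \<infinity>\<close> there is no such \<open>Q\<close>. Only this height inequality is used. The one technical point is that orbit points
  lie in \<open>P\<^sup>N(Qbar)\<close> again, i.e. that polynomial expressions in algebraic numbers are
  algebraic.\<close>

text \<open>Closure of the algebraic numbers under \<open>+\<close> and \<open>*\<close> is only available in HOL-Algebra,
  whose polynomials are coefficient lists with the leading coefficient first; it is transported
  to \<open>algebraic\<close> on \<open>\<complex>\<close> through the field structure of the type.\<close>

abbreviation complex_ring :: "complex ring" where
  "complex_ring \<equiv> ring_of_type_algebra"

lemma complex_ring_simps [simp]:
  "carrier complex_ring = UNIV" "mult complex_ring = (*)" "one complex_ring = 1"
  "zero complex_ring = 0" "add complex_ring = (+)"
  by (simp_all add: ring_of_type_algebra_def)

lemma field_complex_ring: "field complex_ring"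
  by (rule field_from_type_algebra)

interpretation complex_ring: domain complex_ring
  using field_complex_ring by (rule field.axioms(1))

lemma complex_ring_nat_pow [simp]: "x [^]\<^bsub>complex_ring\<^esub> (n::nat) = x ^ n"
  by (induction n) simp_all

lemma complex_ring_eval: "complex_ring.eval p x = poly (Poly (rev p)) x"
  by (induction p) (simp_all add: Poly_append poly_monom algebra_simps)

lemma subfield_Rats_complex_ring: "subfield \<rat> complex_ring"
proof (rule field.subfieldI'[OF field_complex_ring complex_ring.subringI])
  show "\<ominus>\<^bsub>complex_ring\<^esub> x \<in> \<rat>" if "x \<in> \<rat>" for x
    using that complex_ring.minus_equality[of "- x" x] by simp
  show "inv\<^bsub>complex_ring\<^esub> x \<in> \<rat>" if "x \<in> \<rat> - {\<zero>\<^bsub>complex_ring\<^esub>}" for x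
    using that complex_ring.comm_inv_char[of x "inverse x"] by simp
qed auto

lemma algebraic_iff_ring_algebraic:
  "algebraic x \<longleftrightarrow> (complex_ring.algebraic over \<rat>) x"
proof
  assume "algebraic x"
  then obtain p where p: "\<forall>i. Polynomial.coeff p i \<in> \<rat>" "p \<noteq> 0" "poly p x = 0"
    by (auto simp: algebraic_altdef)
  have "rev (coeffs p) \<in> carrier (\<rat>[X]\<^bsub>complex_ring\<^esub>)"
    using p(1,2) by (auto simp: univ_poly_def polynomial_def hd_rev last_coeffs_eq_coeff_degree
        forall_coeffs_conv[of "\<lambda>c. c \<in> \<rat>"])
  moreover have "complex_ring.eval (rev (coeffs p)) x = \<zero>\<^bsub>complex_ring\<^esub>"
    using p(3) by (simp add: complex_ring_eval)
  ultimately show "(complex_ring.algebraic over \<rat>) x"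
    using p(2) by (intro complex_ring.algebraicI) auto
next
  assume "(complex_ring.algebraic over \<rat>) x"
  then obtain L where L: "L \<in> carrier (\<rat>[X]\<^bsub>complex_ring\<^esub>)" "L \<noteq> []"
      "complex_ring.eval L x = \<zero>\<^bsub>complex_ring\<^esub>"
    using complex_ring.algebraicE[OF subfieldE(1)[OF subfield_Rats_complex_ring]] by auto
  then have "set L \<subseteq> \<rat>" "hd L \<noteq> 0"
    by (auto simp: univ_poly_def polynomial_def)
  moreover have "Polynomial.coeff (Poly (rev L)) i \<in> \<rat>" for i
    using \<open>set L \<subseteq> \<rat>\<close>
    by (auto simp: nth_default_def) (metis length_rev nth_mem set_rev subsetD)
  moreover have "Poly (rev L) \<noteq> 0"
    using L(2) \<open>hd L \<noteq> 0\<close> by (metis Poly_eq_0 hd_in_set in_set_replicate set_rev)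
  ultimately show "algebraic x"
    using L(3) by (intro algebraicI'[of "Poly (rev L)"]) (auto simp: complex_ring_eval)
qed

lemma subring_algebraic: "subring {x :: complex. algebraic x} complex_ring"
  using subfieldE(1)[OF field.subfield_of_algebraics[OF field_complex_ring
      subfield_Rats_complex_ring]]
  by (simp add: algebraic_iff_ring_algebraic)

lemma algebraic_add: "algebraic x \<Longrightarrow> algebraic y \<Longrightarrow> algebraic (x + y :: complex)"
  using subringE(7)[OF subring_algebraic] by simp

lemma algebraic_mult: "algebraic x \<Longrightarrow> algebraic y \<Longrightarrow> algebraic (x * y :: complex)"
  using subringE(6)[OF subring_algebraic] by simp

lemma algebraic_power: "algebraic (x :: complex) \<Longrightarrow> algebraic (x ^ n)"
  using subringE(3)[OF subring_algebraic] by (induction n) (simp_all add: algebraic_mult)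

lemma algebraic_sum: "(\<And>a. a \<in> A \<Longrightarrow> algebraic (f a :: complex)) \<Longrightarrow> algebraic (sum f A)"
  by (induction A rule: infinite_finite_induct) (simp_all add: algebraic_add)

lemma algebraic_prod: "(\<And>a. a \<in> A \<Longrightarrow> algebraic (f a :: complex)) \<Longrightarrow> algebraic (prod f A)"
  using subringE(3)[OF subring_algebraic]
  by (induction A rule: infinite_finite_induct) (simp_all add: algebraic_mult)

lemma algebraic_hpoly_eval:
  assumes "\<And>e. algebraic (c e)" and "\<And>i. i \<le> N \<Longrightarrow> algebraic (x i)"
  shows "algebraic (hpoly_eval N d c x)"
  unfolding hpoly_eval_def using assms
  by (intro algebraic_sum algebraic_mult algebraic_prod algebraic_power) auto

lemma proj_class_self: "qbar_vec N x \<Longrightarrow> x \<in> proj_class N x"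
  unfolding proj_class_def by (auto intro!: exI[of _ 1])

lemma qbar_vec_some_rep:
  assumes "Q \<in> PN N"
  shows "qbar_vec N (SOME x. x \<in> Q)"
proof -
  obtain x where Q: "Q = proj_class N x" and "qbar_vec N x"
    using assms unfolding PN_def by blast
  then have "x \<in> Q"
    by (simp only: proj_class_self)
  then have "(SOME x. x \<in> Q) \<in> Q"
    by (rule someI[of "\<lambda>x. x \<in> Q"])
  then show ?thesis
    unfolding Q proj_class_def by simp
qed

lemma endo_app_in_PN:
  assumes \<phi>: "is_endo N \<phi>" and Q: "Q \<in> PN N"
  shows "endo_app N \<phi> Q \<in> PN N"
proof -
  define x where "x = (SOME x. x \<in> Q)"
  define v where "v = (\<lambda>i. if i \<le> N then hpoly_eval N (fst \<phi>) (snd \<phi> i) x else 0)"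
  have x: "qbar_vec N x"
    unfolding x_def using Q by (rule qbar_vec_some_rep)
  have "qbar_vec N v"
    unfolding qbar_vec_def
  proof (intro conjI allI impI)
    show "algebraic (v i)" if "i \<le> N" for i
      using \<phi> x that unfolding v_def is_endo_def qbar_vec_def Let_def
      by (auto intro: algebraic_hpoly_eval)
    show "v i = 0" if "N < i" for i
      using that by (simp add: v_def)
    show "\<exists>i\<le>N. v i \<noteq> 0"
      using \<phi> x unfolding is_endo_def Let_def v_def by auto
  qed
  moreover have "endo_app N \<phi> Q = proj_class N v"
    unfolding endo_app_def v_def x_def ..
  ultimately show ?thesis
    unfolding PN_def by blast
qed

lemma orbit_subset_PN:
  assumes "\<forall>\<phi>\<in>S. is_endo N \<phi>" and "P \<in> PN N"
  shows "orbit N S P \<subseteq> PN N"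
proof -
  have "\<rho> P \<in> PN N" if "\<rho> \<in> comp_monoid N S" for \<rho>
    using that
  proof induction
    case id_in
    show ?case using assms(2) by simp
  next
    case (comp_in \<rho> \<phi>)
    then show ?case using assms(1) by (simp add: endo_app_in_PN)
  qed
  then show ?thesis
    unfolding orbit_def by blast
qed

lemma endo_app_orbit:
  assumes "\<phi> \<in> S" and "Q \<in> orbit N S P"
  shows "endo_app N \<phi> Q \<in> orbit N S P"
proof -
  obtain \<rho> where "\<rho> \<in> comp_monoid N S" and "Q = \<rho> P"
    using assms(2) unfolding orbit_def by blast
  then have "endo_app N \<phi> \<circ> \<rho> \<in> comp_monoid N S"
    and "endo_app N \<phi> Q = (endo_app N \<phi> \<circ> \<rho>) P"
    using assms(1) comp_monoid.comp_in by simp_all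
  then show ?thesis
    unfolding orbit_def by blast
qed

lemma height_defect_le_height_const:
  "Q \<in> PN N \<Longrightarrow>
    ereal \<bar>weil_height N (endo_app N \<phi> Q) - real (endo_deg \<phi>) * weil_height N Q\<bar>
      \<le> height_const N \<phi>"
  unfolding height_const_def by (rule SUP_upper)

lemma height_const_le_height_const_set: "\<phi> \<in> S \<Longrightarrow> height_const N \<phi> \<le> height_const_set N S"
  unfolding height_const_set_def by (auto intro: SUP_upper max.coboundedI1)

lemma one_le_height_const_set: "1 \<le> height_const_set N S"
  unfolding height_const_set_def by (rule max.cobounded2)

lemma endo_app_height_gt:
  assumes "2 \<le> endo_deg \<phi>" and "Q \<in> PN N" and "height_const N \<phi> \<le> ereal c" and "0 \<le> c"
    and "2 * c < weil_height N Q"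
  shows "2 * c < weil_height N (endo_app N \<phi> Q)"
proof -
  have "\<bar>weil_height N (endo_app N \<phi> Q) - real (endo_deg \<phi>) * weil_height N Q\<bar> \<le> c"
    using order_trans[OF height_defect_le_height_const[OF assms(2)] assms(3)] by simp
  moreover have "2 * weil_height N Q \<le> real (endo_deg \<phi>) * weil_height N Q"
    using assms by (intro mult_right_mono) auto
  ultimately show ?thesis
    using assms(4,5) by linarith
qed

theorem lemma4p2:
  fixes N :: nat and S :: "endo set" and K :: "complex set" and P :: "(nat \<Rightarrow> complex) set"
  assumes "finite S"
    and "\<forall>\<phi>\<in>S. is_endo N \<phi> \<and> endo_deg \<phi> \<ge> 2"
    and "number_field K"
    and "\<forall>\<phi>\<in>S. endo_over K \<phi>"
    and "P \<in> PN N" and "point_over N K P"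
  shows "\<forall>\<phi>\<in>S. endo_app N \<phi> ` (orbit N S P - small_orbit N S P)
                  \<subseteq> orbit N S P - small_orbit N S P"
proof (intro ballI subsetI)
  fix \<phi> Q' assume \<phi>: "\<phi> \<in> S" and "Q' \<in> endo_app N \<phi> ` (orbit N S P - small_orbit N S P)"
  then obtain Q where Q: "Q \<in> orbit N S P" "Q \<notin> small_orbit N S P" and Q': "Q' = endo_app N \<phi> Q"
    by blast
  have large: "2 * height_const_set N S < ereal (weil_height N Q)"
    using Q unfolding small_orbit_def by auto
  obtain c where c: "height_const_set N S = ereal c" and "1 \<le> c"
    using large one_le_height_const_set[of N S] by (cases "height_const_set N S") auto
  have "Q \<in> PN N"
    using orbit_subset_PN assms(2,5) Q(1) by blast
  moreover have "height_const N \<phi> \<le> ereal c"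
    using height_const_le_height_const_set[OF \<phi>, of N] c by simp
  moreover have "2 * c < weil_height N Q"
    using large c by simp
  ultimately have "2 * c < weil_height N Q'"
    unfolding Q' using \<phi> assms(2) \<open>1 \<le> c\<close> by (intro endo_app_height_gt) auto
  then show "Q' \<in> orbit N S P - small_orbit N S P"
    using endo_app_orbit[OF \<phi> Q(1)] unfolding Q' small_orbit_def c by auto
qed

end
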